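(* Let $V$ be a real vector space, let $F$ be a geometric mean closed vector lattice, let $T\colon V\times V\to F$ be a vector semi-inner product, and let $u\in F^+$. Define $\|x\|^T_u:=T(x,x)\boxtimes u$ for $x\in V$. If $x,y\in V$ satisfy $T(x,y)=0$, then \[ \|x+y\|^T_u=\|x\|^T_u\boxplus\|y\|^T_u. \]
   Context: All vector spaces are over $\mathbb{R}$ and all vector lattices are Archimedean; $F^+=\{x\in F:x\ge0\}$. A vector lattice $F$ is geometric mean closed if $\inf\{\theta u+\theta^{-1}v:\theta\in(0,\infty)\}$ exists in $F$ for all $u,v\in F^+$, and then $u\boxtimes v:=2^{-1}\inf\{\theta u+\theta^{-1}v:\theta\in(0,\infty)\}$. For $u,v\in F$, $u\boxplus v:=\sup\{(\cos\theta)u+(\sin\theta)v:\theta\in[0,2\pi]\}$; this supremum exists in every geometric mean closed vector lattice. A map $T\colon V\times V\to F$ is a vector semi-inner product if it is bilinear, symmetric ($T(x,y)=T(y,x)$), and satisfies $T(x,x)\ge 0$ for all $x\in V$. *)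

theory Defs
  imports "HOL-Analysis.Analysis"
begin

text \<open>Vector lattices are modelled by the type class constraint
  ordered_real_vector + lattice (a Riesz space); Archimedean property stated explicitly.\<close>

definition archimedean_vl :: "'f::{ordered_real_vector,lattice} itself \<Rightarrow> bool" where
  "archimedean_vl _ \<longleftrightarrow>
     (\<forall>x y :: 'f. 0 \<le> x \<and> (\<forall>n::nat. real n *\<^sub>R x \<le> y) \<longrightarrow> x = 0)"

definition is_inf_of :: "'f::order set \<Rightarrow> 'f \<Rightarrow> bool" where
  "is_inf_of S a \<longleftrightarrow> (\<forall>s\<in>S. a \<le> s) \<and> (\<forall>b. (\<forall>s\<in>S. b \<le> s) \<longrightarrow> b \<le> a)"

definition is_sup_of :: "'f::order set \<Rightarrow> 'f \<Rightarrow> bool" where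
  "is_sup_of S a \<longleftrightarrow> (\<forall>s\<in>S. s \<le> a) \<and> (\<forall>b. (\<forall>s\<in>S. s \<le> b) \<longrightarrow> a \<le> b)"

definition gm_set :: "'f::real_vector \<Rightarrow> 'f \<Rightarrow> 'f set" where
  "gm_set u v = {\<theta> *\<^sub>R u + inverse \<theta> *\<^sub>R v | \<theta>::real. 0 < \<theta>}"

definition geometric_mean_closed :: "'f::{ordered_real_vector,lattice} itself \<Rightarrow> bool" where
  "geometric_mean_closed _ \<longleftrightarrow>
     (\<forall>u v :: 'f. 0 \<le> u \<and> 0 \<le> v \<longrightarrow> (\<exists>a. is_inf_of (gm_set u v) a))"

definition gmean :: "'f::{ordered_real_vector,lattice} \<Rightarrow> 'f \<Rightarrow> 'f" where
  "gmean u v = (1/2) *\<^sub>R (THE a. is_inf_of (gm_set u v) a)"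

definition pyth_sum :: "'f::{ordered_real_vector,lattice} \<Rightarrow> 'f \<Rightarrow> 'f" where
  "pyth_sum u v =
     (THE a. is_sup_of {cos \<theta> *\<^sub>R u + sin \<theta> *\<^sub>R v | \<theta>::real. \<theta> \<in> {0..2*pi}} a)"

definition vector_semi_inner_product ::
  "('v::real_vector \<Rightarrow> 'v \<Rightarrow> 'f::{ordered_real_vector,lattice}) \<Rightarrow> bool" where
  "vector_semi_inner_product T \<longleftrightarrow>
     (\<forall>x. linear (T x)) \<and> (\<forall>y. linear (\<lambda>x. T x y)) \<and>
     (\<forall>x y. T x y = T y x) \<and> (\<forall>x. 0 \<le> T x x)"

definition T_norm :: "('v \<Rightarrow> 'v \<Rightarrow> 'f::{ordered_real_vector,lattice}) \<Rightarrow> 'f \<Rightarrow> 'v \<Rightarrow> 'f" where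
  "T_norm T u x = gmean (T x x) u"

end

theory Submission
  imports Defs "HOL-Library.Lattice_Algebras"
begin

text \<open>
  With A = T x x and B = T y y we have T (x + y) (x + y) = A + B, and every rotation
  cos t p + sin t q of p, q >= 0 is dominated by one with cos t, sin t >= 0. So it suffices
  that gmean (A + B) u is the supremum of c gmean A u + d gmean B u over c, d >= 0 with
  c^2 + d^2 = 1. These are lower bounds: add 2 c gmean A u <= theta A + (c^2 / theta) u and
  the analogous estimate for B. For the converse one uses two suprema formulas valid in
  Archimedean vector lattices: gmean a u is the supremum of inf (theta a) (u / theta) over
  theta > 0, and inf (X + Y) U is the supremum of inf X (l U) + inf Y ((1 - l) U) over
  0 <= l <= 1; with l = c^2 they split inf (theta (A + B)) (u / theta) into parts below
  c gmean A u and d gmean B u. Both formulas come from one device: if alpha_k x - beta_k u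
  increases through zero in steps of size at most eps (x + u), an element below all
  |alpha_k x - beta_k u| is below 2 eps (x + u), hence below 0 by the Archimedean property.
\<close>

section \<open>Lattice-ordered groups\<close>

text \<open>The sort of the theorem is not the class \<^class>\<open>lattice_ab_group_add\<close>, so its theory
  is imported by interpretation. The absolute value of g is written pprt g - nprt g.\<close>

interpretation lgroup: lattice_ab_group_add "(+)" "0::'a::{ordered_ab_group_add,lattice}"
  "(-)" uminus "(\<le>)" "(<)" inf sup
  by unfold_locales

lemma pprt_add_le:
  fixes a b :: "'a::{ordered_ab_group_add,lattice}"
  shows "lgroup.pprt (a + b) \<le> lgroup.pprt a + lgroup.pprt b"
  by (simp add: lgroup.pprt_def add_mono)

lemma inf_pprt_uminus_nprt:
  fixes a :: "'a::{ordered_ab_group_add,lattice}"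
  shows "inf (lgroup.pprt a) (- lgroup.nprt a) = 0"
proof -
  have "inf (lgroup.pprt a) (- lgroup.nprt a)
      = - lgroup.nprt a + inf (lgroup.pprt a + lgroup.nprt a) 0"
    by (simp add: lgroup.add_inf_distrib_left)
  also have "\<dots> = 0"
    by (simp only: lgroup.prts[symmetric] lgroup.nprt_def[symmetric]) simp
  finally show ?thesis .
qed

lemma add_minus_double_inf:
  fixes a b :: "'a::{ordered_ab_group_add,lattice}"
  shows "a + b - (inf a b + inf a b) = lgroup.pprt (a - b) - lgroup.nprt (a - b)"
proof -
  have diff_inf: "a - inf a b = lgroup.pprt (a - b)" for a b :: 'a
    by (simp add: lgroup.diff_inf_eq_sup lgroup.add_sup_distrib_left lgroup.pprt_def sup_commute)
  have "a + b - (c + c) = (a - c) + (b - c)" for c :: 'a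
    by (simp add: algebra_simps)
  then have "a + b - (inf a b + inf a b) = (a - inf a b) + (b - inf b a)"
    by (simp add: inf_commute)
  also have "\<dots> = lgroup.pprt (a - b) + lgroup.pprt (b - a)"
    by (simp only: diff_inf)
  also have "lgroup.pprt (b - a) = - lgroup.nprt (a - b)"
    using lgroup.pprt_neg[of "a - b"] by simp
  finally show ?thesis
    by simp
qed

lemma pprt_minus_nprt_bounds:
  fixes g :: "'a::{ordered_ab_group_add,lattice}"
  shows "0 \<le> lgroup.pprt g - lgroup.nprt g" "g \<le> lgroup.pprt g - lgroup.nprt g"
    "- g \<le> lgroup.pprt g - lgroup.nprt g"
proof -
  have "0 \<le> p - n \<and> p + n \<le> p - n \<and> - (p + n) \<le> p - n" if "0 \<le> p" "n \<le> 0" for p n :: 'a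
  proof -
    have "- p \<le> p" "n \<le> - n"
      using that by (meson neg_le_0_iff_le neg_0_le_iff_le order_trans)+
    then show ?thesis
      using that by (auto simp: algebra_simps intro: order_trans)
  qed
  from this[of "lgroup.pprt g" "lgroup.nprt g"]
  show "0 \<le> lgroup.pprt g - lgroup.nprt g" "g \<le> lgroup.pprt g - lgroup.nprt g"
    "- g \<le> lgroup.pprt g - lgroup.nprt g"
    unfolding lgroup.prts[of g, symmetric] by simp_all
qed

lemma pprt_diff_le:
  fixes y v :: "'a::{ordered_ab_group_add,lattice}"
  assumes "0 \<le> y" "0 \<le> v"
  shows "lgroup.pprt (y - v) \<le> y"
  using assms by (simp add: lgroup.pprt_def)

text \<open>An increment 0 <= d <= c cannot carry z past the bound: for e = g + d and
  r = d - pprt e one gets z + nprt e <= c + inf (- nprt r) (pprt r) = c.\<close>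

lemma le_diff_nprt_increment:
  fixes c d g z :: "'a::{ordered_ab_group_add,lattice}"
  assumes "0 \<le> d" "d \<le> c" "z \<le> c - lgroup.nprt g"
    and "z \<le> lgroup.pprt (g + d) - lgroup.nprt (g + d)"
  shows "z \<le> c - lgroup.nprt (g + d)"
proof -
  define e where "e = g + d"
  define r where "r = d - lgroup.pprt e"
  have "r + - lgroup.nprt e = d - (lgroup.pprt e + lgroup.nprt e)"
    by (simp add: r_def algebra_simps)
  also have "\<dots> = - g"
    by (simp only: lgroup.prts[symmetric]) (simp add: e_def)
  finally have "- lgroup.nprt g = lgroup.pprt (r + - lgroup.nprt e)"
    by (simp add: lgroup.pprt_neg)
  also have "\<dots> \<le> lgroup.pprt r - lgroup.nprt e"
    using pprt_add_le[of r "- lgroup.nprt e"] by simp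
  finally have "c - lgroup.nprt g \<le> c + (lgroup.pprt r - lgroup.nprt e)"
    using add_left_mono by (simp only: diff_conv_add_uminus)
  with assms(3) have "z \<le> c + (lgroup.pprt r - lgroup.nprt e)"
    by (rule order_trans)
  then have "z + lgroup.nprt e \<le> c + lgroup.pprt r"
    by (simp add: algebra_simps)
  moreover have "z + lgroup.nprt e \<le> d - r"
    using assms(4) unfolding r_def e_def by (simp add: algebra_simps)
  ultimately have "z + lgroup.nprt e \<le> inf (d - r) (c + lgroup.pprt r)"
    by simp
  also have "\<dots> = c + inf (d - c - r) (lgroup.pprt r)"
    by (simp add: lgroup.add_inf_distrib_left algebra_simps)
  also have "\<dots> \<le> c + inf (- lgroup.nprt r) (lgroup.pprt r)"
  proof -
    have "d - c - r \<le> - r"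
      using assms(2) by simp
    also have "\<dots> \<le> - lgroup.nprt r"
      by (simp add: lgroup.nprt_def)
    finally show ?thesis
      by (intro add_left_mono inf_mono) simp_all
  qed
  finally show ?thesis
    by (simp add: inf_commute inf_pprt_uminus_nprt e_def algebra_simps)
qed

lemma abs_lower_bound_increasing_chain:
  fixes g :: "nat \<Rightarrow> 'a::{ordered_ab_group_add,lattice}"
  assumes "\<And>k. k < n \<Longrightarrow> g k \<le> g (Suc k) \<and> g (Suc k) - g k \<le> D"
    and "\<And>k. k \<le> n \<Longrightarrow> z \<le> lgroup.pprt (g k) - lgroup.nprt (g k)"
    and "0 \<le> D"
  shows "z \<le> D + lgroup.pprt (g 0) - lgroup.nprt (g n)"
  using assms
proof (induction n)
  case 0
  then have "0 + z \<le> D + (lgroup.pprt (g 0) - lgroup.nprt (g 0))"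
    by (intro add_mono) auto
  then show ?case
    by (simp add: algebra_simps)
next
  case (Suc n)
  define d where "d = g (Suc n) - g n"
  have "z \<le> (D + lgroup.pprt (g 0)) - lgroup.nprt (g n + d)"
  proof (rule le_diff_nprt_increment)
    show "0 \<le> d" "d \<le> D + lgroup.pprt (g 0)"
      using Suc.prems(1)[of n] by (auto simp: d_def add_increasing2)
    show "z \<le> D + lgroup.pprt (g 0) - lgroup.nprt (g n)"
      using Suc by simp
    show "z \<le> lgroup.pprt (g n + d) - lgroup.nprt (g n + d)"
      using Suc.prems(2)[of "Suc n"] by (simp add: d_def)
  qed
  then show ?case
    by (simp add: d_def)
qed

lemma scaleR_inf:
  fixes a b :: "'a::{ordered_real_vector,lattice}"
  assumes "0 < c"
  shows "c *\<^sub>R inf a b = inf (c *\<^sub>R a) (c *\<^sub>R b)"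
proof (rule antisym)
  show "c *\<^sub>R inf a b \<le> inf (c *\<^sub>R a) (c *\<^sub>R b)"
    using assms by (simp add: scaleR_left_mono)
  have "inf (c *\<^sub>R a) (c *\<^sub>R b) /\<^sub>R c \<le> (c *\<^sub>R a) /\<^sub>R c"
    "inf (c *\<^sub>R a) (c *\<^sub>R b) /\<^sub>R c \<le> (c *\<^sub>R b) /\<^sub>R c"
    using assms by (intro scaleR_left_mono; simp)+
  then have "inf (c *\<^sub>R a) (c *\<^sub>R b) /\<^sub>R c \<le> inf a b"
    using assms by simp
  then show "inf (c *\<^sub>R a) (c *\<^sub>R b) \<le> c *\<^sub>R inf a b"
    using pos_divideR_le_eq[OF assms] by blast
qed

section \<open>Crossing chains in Archimedean vector lattices\<close>

text \<open>Along a crossing chain the vectors \<alpha> k x - \<beta> k u (x, u >= 0) increase in steps of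
  at most \<epsilon> (x + u), from almost nonpositive to almost nonnegative.\<close>

definition crossing_chain :: "real \<Rightarrow> (nat \<Rightarrow> real) \<Rightarrow> (nat \<Rightarrow> real) \<Rightarrow> nat \<Rightarrow> bool" where
  "crossing_chain \<epsilon> \<alpha> \<beta> n \<longleftrightarrow>
     (\<forall>k<n. \<alpha> k \<le> \<alpha> (Suc k) \<and> \<alpha> (Suc k) \<le> \<alpha> k + \<epsilon> \<and>
            \<beta> (Suc k) \<le> \<beta> k \<and> \<beta> k \<le> \<beta> (Suc k) + \<epsilon>) \<and>
     (\<forall>k\<le>n. 0 \<le> \<alpha> k \<and> 0 \<le> \<beta> k) \<and> \<alpha> 0 \<le> \<epsilon> \<and> \<beta> n \<le> \<epsilon>"

lemma crossing_chain_abs_bound: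
  fixes x u z :: "'a::{ordered_real_vector,lattice}"
  assumes chain: "crossing_chain \<epsilon> \<alpha> \<beta> n" and x: "0 \<le> x" and u: "0 \<le> u"
    and z: "\<And>k. k \<le> n \<Longrightarrow>
      z \<le> lgroup.pprt (\<alpha> k *\<^sub>R x - \<beta> k *\<^sub>R u) - lgroup.nprt (\<alpha> k *\<^sub>R x - \<beta> k *\<^sub>R u)"
  shows "z \<le> (2 * \<epsilon>) *\<^sub>R (x + u)"
proof -
  have steps: "\<And>k. k < n \<Longrightarrow> 0 \<le> \<alpha> (Suc k) - \<alpha> k \<and> \<alpha> (Suc k) - \<alpha> k \<le> \<epsilon> \<and>
      0 \<le> \<beta> k - \<beta> (Suc k) \<and> \<beta> k - \<beta> (Suc k) \<le> \<epsilon>"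
    and nonneg: "\<And>k. k \<le> n \<Longrightarrow> 0 \<le> \<alpha> k \<and> 0 \<le> \<beta> k"
    and ends: "\<alpha> 0 \<le> \<epsilon>" "\<beta> n \<le> \<epsilon>"
    using chain by (auto simp: crossing_chain_def)
  have "0 \<le> \<epsilon>"
    using nonneg[of 0] ends(1) by linarith
  define g where "g k = \<alpha> k *\<^sub>R x - \<beta> k *\<^sub>R u" for k
  have "z \<le> \<epsilon> *\<^sub>R (x + u) + lgroup.pprt (g 0) - lgroup.nprt (g n)"
  proof (rule abs_lower_bound_increasing_chain)
    fix k assume "k < n"
    moreover have "g (Suc k) - g k = (\<alpha> (Suc k) - \<alpha> k) *\<^sub>R x + (\<beta> k - \<beta> (Suc k)) *\<^sub>R u"
      by (simp add: g_def algebra_simps)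
    ultimately have "0 \<le> g (Suc k) - g k" "g (Suc k) - g k \<le> \<epsilon> *\<^sub>R (x + u)"
      using steps[of k] x u by (auto simp: scaleR_add_right
          intro!: add_nonneg_nonneg add_mono scaleR_right_mono scaleR_nonneg_nonneg)
    then show "g k \<le> g (Suc k) \<and> g (Suc k) - g k \<le> \<epsilon> *\<^sub>R (x + u)"
      by simp
  next
    show "0 \<le> \<epsilon> *\<^sub>R (x + u)"
      using \<open>0 \<le> \<epsilon>\<close> x u by (intro scaleR_nonneg_nonneg add_nonneg_nonneg)
  qed (use z g_def in auto)
  then have chain_bound: "z \<le> \<epsilon> *\<^sub>R (x + u) + (lgroup.pprt (g 0) + - lgroup.nprt (g n))"
    by (simp add: algebra_simps)
  have "lgroup.pprt (g 0) \<le> \<alpha> 0 *\<^sub>R x"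
    unfolding g_def using nonneg[of 0] x u by (intro pprt_diff_le scaleR_nonneg_nonneg) auto
  then have "lgroup.pprt (g 0) \<le> \<epsilon> *\<^sub>R x"
    using scaleR_right_mono[OF ends(1) x] by (rule order_trans)
  moreover have "- lgroup.nprt (g n) \<le> \<beta> n *\<^sub>R u"
    unfolding g_def lgroup.pprt_neg[symmetric] minus_diff_eq
    using nonneg[of n] x u by (intro pprt_diff_le scaleR_nonneg_nonneg) auto
  then have "- lgroup.nprt (g n) \<le> \<epsilon> *\<^sub>R u"
    using scaleR_right_mono[OF ends(2) u] by (rule order_trans)
  ultimately have "z \<le> \<epsilon> *\<^sub>R (x + u) + (\<epsilon> *\<^sub>R x + \<epsilon> *\<^sub>R u)"
    using chain_bound by (meson add_left_mono add_mono order_trans)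
  then show ?thesis
    by (simp only: mult_2 scaleR_add_left scaleR_add_right add_ac)
qed

lemma archimedean_vl_eq_0:
  fixes z E :: "'a::{ordered_real_vector,lattice}"
  assumes "archimedean_vl TYPE('a)" and "0 \<le> z"
    and small: "\<And>N::nat. 1 \<le> N \<Longrightarrow> z \<le> (1 / real N) *\<^sub>R E"
  shows "z = 0"
proof -
  have "real n *\<^sub>R z \<le> E" for n
  proof (cases "n = 0")
    case True
    then show ?thesis
      using small[of 1] \<open>0 \<le> z\<close> by simp
  next
    case False
    then have "real n *\<^sub>R z \<le> real n *\<^sub>R ((1 / real n) *\<^sub>R E)"
      using small[of n] by (intro scaleR_left_mono) auto
    then show ?thesis
      using False by simp
  qed
  then show ?thesis
    using assms(1,2) unfolding archimedean_vl_def by blast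
qed

lemma le_of_crossing_chains:
  fixes v w x u :: "'a::{ordered_real_vector,lattice}"
  assumes arch: "archimedean_vl TYPE('a)" and x: "0 \<le> x" and u: "0 \<le> u"
    and chains: "\<And>N. 1 \<le> N \<Longrightarrow>
      \<exists>\<alpha> \<beta> n. crossing_chain (1 / real N) \<alpha> \<beta> n \<and> (\<forall>k\<le>n. (\<alpha> k, \<beta> k) \<in> C)"
    and bound: "\<And>a b. (a, b) \<in> C \<Longrightarrow>
      v \<le> w + (lgroup.pprt (a *\<^sub>R x - b *\<^sub>R u) - lgroup.nprt (a *\<^sub>R x - b *\<^sub>R u))"
  shows "v \<le> w"
proof -
  define z where "z = lgroup.pprt (v - w)"
  have z_le: "z \<le> lgroup.pprt (a *\<^sub>R x - b *\<^sub>R u) - lgroup.nprt (a *\<^sub>R x - b *\<^sub>R u)"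
    if "(a, b) \<in> C" for a b
    using bound[OF that] pprt_minus_nprt_bounds(1)[of "a *\<^sub>R x - b *\<^sub>R u"]
    by (simp add: z_def lgroup.pprt_def diff_le_eq add.commute)
  have "z = 0"
  proof (rule archimedean_vl_eq_0[OF arch])
    show "0 \<le> z"
      by (simp add: z_def)
    fix N :: nat
    assume "1 \<le> N"
    then obtain \<alpha> \<beta> n where "crossing_chain (1 / real N) \<alpha> \<beta> n" "\<forall>k\<le>n. (\<alpha> k, \<beta> k) \<in> C"
      using chains by blast
    then have "z \<le> (2 * (1 / real N)) *\<^sub>R (x + u)"
      by (intro crossing_chain_abs_bound[OF _ x u]) (auto intro: z_le)
    then show "z \<le> (1 / real N) *\<^sub>R (2 *\<^sub>R (x + u))"
      by simp
  qed
  then show ?thesis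
    using lgroup.le_zero_iff_zero_pprt[of "v - w"] by (simp add: z_def)
qed

lemma crossing_chain_segment:
  assumes "1 \<le> N"
  shows "crossing_chain (1 / real N) (\<lambda>k. real k / real N) (\<lambda>k. 1 - real k / real N) N"
  using assms by (auto simp: crossing_chain_def field_simps)

lemma inverse_step_le:
  fixes m :: real
  assumes m: "1 \<le> m"
  shows "m ^ 3 / (m ^ 2 + real k) \<le> m ^ 3 / (m ^ 2 + real (Suc k)) + 1 / m"
proof -
  have pos: "0 < m ^ 2 + real j" for j
    using m by (simp add: add_pos_nonneg)
  have "m ^ 3 / (m ^ 2 + real k) - m ^ 3 / (m ^ 2 + real (Suc k))
      = m ^ 3 / ((m ^ 2 + real k) * (m ^ 2 + real (Suc k)))"
    using pos[of k] pos[of "Suc k"] by (simp add: field_simps)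
  also have "\<dots> \<le> m ^ 3 / (m ^ 2 * m ^ 2)"
    using m pos[of k] pos[of "Suc k"] by (intro divide_left_mono mult_mono mult_pos_pos) auto
  also have "\<dots> = 1 / m"
    using m by (simp add: field_simps power_numeral_reduce)
  finally show ?thesis
    by simp
qed

text \<open>The points theta_k = 1/N + k/N^3, k <= N^4, run from 1/N to N + 1/N; as
  theta_k >= 1/N, the steps of 1/theta_k are at most N^2/N^3.\<close>

lemma crossing_chain_hyperbola:
  assumes "1 \<le> N"
  shows "crossing_chain (1 / real N)
    (\<lambda>k. (real N ^ 2 + real k) / real N ^ 3) (\<lambda>k. real N ^ 3 / (real N ^ 2 + real k)) (N ^ 4)"
proof -
  define m where "m = real N"
  have m: "1 \<le> m"
    using assms by (simp add: m_def)
  have pos: "0 < m ^ 2 + real k" for k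
    using m by (simp add: add_pos_nonneg)
  have "1 / m ^ 3 \<le> 1 / m"
    using m power_increasing[of 1 3 m] by (intro divide_left_mono) auto
  then have alpha_step: "(m ^ 2 + real (Suc k)) / m ^ 3 \<le> (m ^ 2 + real k) / m ^ 3 + 1 / m" for k
    by (simp add: add_divide_distrib)
  have beta_end: "m ^ 3 / (m ^ 2 + m ^ 4) \<le> 1 / m"
  proof -
    have "m ^ 3 / (m ^ 2 + m ^ 4) \<le> m ^ 3 / m ^ 4"
      using m by (intro divide_left_mono mult_pos_pos add_pos_pos) auto
    also have "\<dots> = 1 / m"
      using m by (simp add: field_simps power_numeral_reduce)
    finally show ?thesis .
  qed
  show ?thesis
    unfolding crossing_chain_def m_def[symmetric]
  proof (intro conjI allI impI)
    fix k
    show "(m ^ 2 + real k) / m ^ 3 \<le> (m ^ 2 + real (Suc k)) / m ^ 3"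
      using m by (intro divide_right_mono) auto
    show "m ^ 3 / (m ^ 2 + real (Suc k)) \<le> m ^ 3 / (m ^ 2 + real k)"
      using m pos[of k] pos[of "Suc k"] by (intro divide_left_mono mult_pos_pos) auto
    show "0 \<le> (m ^ 2 + real k) / m ^ 3" "0 \<le> m ^ 3 / (m ^ 2 + real k)"
      using m by auto
  next
    show "(m ^ 2 + real 0) / m ^ 3 \<le> 1 / m"
      using m by (simp add: field_simps power_numeral_reduce)
    show "m ^ 3 / (m ^ 2 + real (N ^ 4)) \<le> 1 / m"
      using beta_end by (simp add: m_def)
  qed (use alpha_step inverse_step_le[OF m] in auto)
qed

lemma inf_add_le_split_add_abs:
  fixes X Y U :: "'a::{ordered_real_vector,lattice}"
  assumes l: "0 \<le> l" "l \<le> 1"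
  defines "g \<equiv> l *\<^sub>R Y - (1 - l) *\<^sub>R X"
  shows "inf (X + Y) U \<le>
    inf X (l *\<^sub>R U) + inf Y ((1 - l) *\<^sub>R U) + (lgroup.pprt g - lgroup.nprt g)"
proof -
  define v where "v = inf (X + Y) U"
  define G where "G = lgroup.pprt g - lgroup.nprt g"
  have G: "0 \<le> G" "g \<le> G" "- g \<le> G"
    unfolding G_def by (fact pprt_minus_nprt_bounds)+
  have convex: "v \<le> t *\<^sub>R (X + Y) + (1 - t) *\<^sub>R U" if "0 \<le> t" "t \<le> 1" for t
  proof -
    have "v = t *\<^sub>R v + (1 - t) *\<^sub>R v"
      by (simp add: algebra_simps)
    also have "\<dots> \<le> t *\<^sub>R (X + Y) + (1 - t) *\<^sub>R U"
      using that by (intro add_mono scaleR_left_mono) (auto simp: v_def)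
    finally show ?thesis .
  qed
  have "v - G \<le> X + Y"
    using G by (simp add: v_def add_increasing2 diff_le_eq)
  moreover have "v - G \<le> l *\<^sub>R U + (1 - l) *\<^sub>R U"
    using G by (simp add: v_def add_increasing2 diff_le_eq flip: scaleR_left_distrib)
  moreover have "v - G \<le> X + (1 - l) *\<^sub>R U"
  proof -
    have "v - G \<le> l *\<^sub>R (X + Y) + (1 - l) *\<^sub>R U - g"
      using convex[OF l] G by (intro diff_mono) auto
    then show ?thesis
      by (simp add: g_def algebra_simps)
  qed
  moreover have "v - G \<le> l *\<^sub>R U + Y"
  proof -
    have "v - G \<le> (1 - l) *\<^sub>R (X + Y) + (1 - (1 - l)) *\<^sub>R U - - g"
      using convex[of "1 - l"] l G by (intro diff_mono) auto
    then show ?thesis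
      by (simp add: g_def algebra_simps)
  qed
  ultimately have "v - G \<le> inf X (l *\<^sub>R U) + inf Y ((1 - l) *\<^sub>R U)"
    by (simp add: lgroup.add_inf_distrib_left lgroup.add_inf_distrib_right add.commute)
  then show ?thesis
    by (simp add: v_def G_def diff_le_eq)
qed

lemma inf_add_le_of_split_le:
  fixes X Y U w :: "'a::{ordered_real_vector,lattice}"
  assumes arch: "archimedean_vl TYPE('a)" and "0 \<le> X" "0 \<le> Y" "0 \<le> U"
    and split_le: "\<And>l. 0 \<le> l \<Longrightarrow> l \<le> 1 \<Longrightarrow> inf X (l *\<^sub>R U) + inf Y ((1 - l) *\<^sub>R U) \<le> w"
  shows "inf (X + Y) U \<le> w"
proof (rule le_of_crossing_chains[OF arch \<open>0 \<le> Y\<close> \<open>0 \<le> X\<close>])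
  fix N :: nat
  assume "1 \<le> N"
  with crossing_chain_segment show "\<exists>\<alpha> \<beta> n. crossing_chain (1 / real N) \<alpha> \<beta> n \<and>
      (\<forall>k\<le>n. (\<alpha> k, \<beta> k) \<in> {(l, 1 - l) | l. 0 \<le> l \<and> l \<le> 1})"
    by fastforce
next
  fix a b :: real
  assume "(a, b) \<in> {(l, 1 - l) | l. 0 \<le> l \<and> l \<le> 1}"
  then obtain l where l: "0 \<le> l" "l \<le> 1" and ab: "a = l" "b = 1 - l"
    by blast
  show "inf (X + Y) U \<le> w + (lgroup.pprt (a *\<^sub>R Y - b *\<^sub>R X) - lgroup.nprt (a *\<^sub>R Y - b *\<^sub>R X))"
    using inf_add_le_split_add_abs[OF l, of X Y U] split_le[OF l] unfolding ab
    by (meson add_right_mono order_trans)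
qed

section \<open>Geometric means\<close>

lemma the_is_inf_of: "is_inf_of S a \<Longrightarrow> (THE a. is_inf_of S a) = a"
  unfolding is_inf_of_def by (rule the_equality) (auto intro: antisym)

lemma the_is_sup_of: "is_sup_of S a \<Longrightarrow> (THE a. is_sup_of S a) = a"
  unfolding is_sup_of_def by (rule the_equality) (auto intro: antisym)

lemma gmean_is_inf_of:
  fixes a b :: "'a::{ordered_real_vector,lattice}"
  assumes "geometric_mean_closed TYPE('a)" "0 \<le> a" "0 \<le> b"
  shows "is_inf_of (gm_set a b) (2 *\<^sub>R gmean a b)"
proof -
  obtain M where "is_inf_of (gm_set a b) M"
    using assms unfolding geometric_mean_closed_def by blast
  then show ?thesis
    by (simp add: gmean_def the_is_inf_of)
qed

lemma double_gmean_le: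
  assumes "is_inf_of (gm_set a b) (2 *\<^sub>R gmean a b)" "0 < \<theta>"
  shows "2 *\<^sub>R gmean a b \<le> \<theta> *\<^sub>R a + inverse \<theta> *\<^sub>R b"
  using assms unfolding is_inf_of_def gm_set_def by blast

lemma gmean_nonneg:
  fixes a b :: "'a::{ordered_real_vector,lattice}"
  assumes "0 \<le> a" "0 \<le> b" "is_inf_of (gm_set a b) (2 *\<^sub>R gmean a b)"
  shows "0 \<le> gmean a b"
proof -
  have "\<forall>s\<in>gm_set a b. 0 \<le> s"
    using assms(1,2) unfolding gm_set_def by (auto intro!: add_nonneg_nonneg scaleR_nonneg_nonneg)
  then have "0 \<le> 2 *\<^sub>R gmean a b"
    using assms(3) unfolding is_inf_of_def by blast
  then show ?thesis
    by (simp add: zero_le_scaleR_iff)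
qed

lemma inf_le_gmean:
  fixes a b :: "'a::{ordered_real_vector,lattice}"
  assumes a: "0 \<le> a" and b: "0 \<le> b" and gm: "is_inf_of (gm_set a b) (2 *\<^sub>R gmean a b)"
    and \<theta>: "0 < \<theta>"
  shows "inf (\<theta> *\<^sub>R a) (inverse \<theta> *\<^sub>R b) \<le> gmean a b"
proof -
  define m where "m = inf (\<theta> *\<^sub>R a) (inverse \<theta> *\<^sub>R b)"
  have "0 \<le> m"
    using a b \<theta> by (simp add: m_def scaleR_nonneg_nonneg)
  have "2 *\<^sub>R m \<le> \<phi> *\<^sub>R a + inverse \<phi> *\<^sub>R b" if \<phi>: "0 < \<phi>" for \<phi>
  proof -
    have "0 \<le> (\<phi> - \<theta>) ^ 2 / (\<phi> * \<theta>)"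
      using \<phi> \<theta> by simp
    also have "\<dots> = \<phi> / \<theta> + \<theta> / \<phi> - 2"
      using \<phi> \<theta> by (simp add: field_simps power2_eq_square)
    finally have "2 *\<^sub>R m \<le> (\<phi> / \<theta> + \<theta> / \<phi>) *\<^sub>R m"
      using \<open>0 \<le> m\<close> by (intro scaleR_right_mono) auto
    also have "\<dots> \<le> (\<phi> / \<theta>) *\<^sub>R (\<theta> *\<^sub>R a) + (\<theta> / \<phi>) *\<^sub>R (inverse \<theta> *\<^sub>R b)"
      unfolding scaleR_left_distrib m_def using \<phi> \<theta> by (intro add_mono scaleR_left_mono) auto
    also have "\<dots> = \<phi> *\<^sub>R a + inverse \<phi> *\<^sub>R b"
      using \<phi> \<theta> by (simp add: field_simps)
    finally show ?thesis .
  qed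
  then have "2 *\<^sub>R m \<le> 2 *\<^sub>R gmean a b"
    using gm unfolding is_inf_of_def gm_set_def by blast
  then show ?thesis
    by (simp add: m_def scaleR_le_cancel_left_pos)
qed

lemma gmean_le_of_inf_le:
  fixes a b w :: "'a::{ordered_real_vector,lattice}"
  assumes arch: "archimedean_vl TYPE('a)" and a: "0 \<le> a" and b: "0 \<le> b"
    and gm: "is_inf_of (gm_set a b) (2 *\<^sub>R gmean a b)"
    and inf_le: "\<And>\<theta>. 0 < \<theta> \<Longrightarrow> inf (\<theta> *\<^sub>R a) (inverse \<theta> *\<^sub>R b) \<le> w"
  shows "gmean a b \<le> w"
proof -
  have "2 *\<^sub>R gmean a b \<le> w + w"
  proof (rule le_of_crossing_chains[OF arch a b])
    fix N :: nat
    assume "1 \<le> N"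
    from crossing_chain_hyperbola[OF this] show "\<exists>\<alpha> \<beta> n. crossing_chain (1 / real N) \<alpha> \<beta> n \<and>
        (\<forall>k\<le>n. (\<alpha> k, \<beta> k) \<in> {(\<theta>, inverse \<theta>) | \<theta>. 0 < \<theta>})"
      using \<open>1 \<le> N\<close> by (intro exI conjI allI impI) (auto simp: add_pos_nonneg)
  next
    fix s t :: real
    assume "(s, t) \<in> {(\<theta>, inverse \<theta>) | \<theta>. 0 < \<theta>}"
    then obtain \<theta> where \<theta>: "0 < \<theta>" and st: "s = \<theta>" "t = inverse \<theta>"
      by blast
    let ?p = "\<theta> *\<^sub>R a" and ?q = "inverse \<theta> *\<^sub>R b"
    have "2 *\<^sub>R gmean a b \<le> ?p + ?q"
      using gm \<theta> by (rule double_gmean_le)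
    also have "\<dots> = (inf ?p ?q + inf ?p ?q) + (lgroup.pprt (?p - ?q) - lgroup.nprt (?p - ?q))"
      using add_minus_double_inf[of ?p ?q] by (simp add: algebra_simps)
    also have "\<dots> \<le> (w + w) + (lgroup.pprt (?p - ?q) - lgroup.nprt (?p - ?q))"
      using inf_le[OF \<theta>] by (intro add_right_mono add_mono)
    finally show "2 *\<^sub>R gmean a b \<le> w + w + (lgroup.pprt (s *\<^sub>R a - t *\<^sub>R b) - lgroup.nprt (s *\<^sub>R a - t *\<^sub>R b))"
      unfolding st .
  qed
  then show ?thesis
    by (simp add: scaleR_le_cancel_left_pos flip: scaleR_2)
qed

lemma scaled_gmean_le:
  fixes a b :: "'a::{ordered_real_vector,lattice}"
  assumes a: "0 \<le> a" and b: "0 \<le> b" and gm: "is_inf_of (gm_set a b) (2 *\<^sub>R gmean a b)"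
    and c: "0 \<le> c" and \<theta>: "0 < \<theta>"
  shows "(2 * c) *\<^sub>R gmean a b \<le> \<theta> *\<^sub>R a + (c ^ 2 / \<theta>) *\<^sub>R b"
proof (cases "c = 0")
  case True
  then show ?thesis
    using a b \<theta> by (simp add: scaleR_nonneg_nonneg)
next
  case False
  with c have "0 < c"
    by simp
  have "(2 * c) *\<^sub>R gmean a b = c *\<^sub>R (2 *\<^sub>R gmean a b)"
    by (simp only: scaleR_scaleR mult.commute)
  also have "\<dots> \<le> c *\<^sub>R ((\<theta> / c) *\<^sub>R a + inverse (\<theta> / c) *\<^sub>R b)"
    using double_gmean_le[OF gm, of "\<theta> / c"] \<theta> \<open>0 < c\<close> by (intro scaleR_left_mono) auto
  also have "\<dots> = \<theta> *\<^sub>R a + (c ^ 2 / \<theta>) *\<^sub>R b"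
    using \<open>0 < c\<close> by (simp add: scaleR_add_right power2_eq_square)
  finally show ?thesis .
qed

lemma inf_le_scaled_gmean:
  fixes a b :: "'a::{ordered_real_vector,lattice}"
  assumes a: "0 \<le> a" and b: "0 \<le> b" and gm: "is_inf_of (gm_set a b) (2 *\<^sub>R gmean a b)"
    and c: "0 \<le> c" and \<theta>: "0 < \<theta>"
  shows "inf (\<theta> *\<^sub>R a) ((c ^ 2 / \<theta>) *\<^sub>R b) \<le> c *\<^sub>R gmean a b"
proof (cases "c = 0")
  case True
  then show ?thesis
    by simp
next
  case False
  with c have "0 < c"
    by simp
  then have "inf (\<theta> *\<^sub>R a) ((c ^ 2 / \<theta>) *\<^sub>R b)
      = c *\<^sub>R inf ((\<theta> / c) *\<^sub>R a) (inverse (\<theta> / c) *\<^sub>R b)"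
    by (simp add: scaleR_inf power2_eq_square)
  also have "\<dots> \<le> c *\<^sub>R gmean a b"
    using inf_le_gmean[OF a b gm, of "\<theta> / c"] \<open>0 < c\<close> \<theta> by (intro scaleR_left_mono) auto
  finally show ?thesis .
qed

section \<open>Pythagorean sums of geometric means\<close>

lemma quarter_circle_le_gmean_add:
  fixes A B u :: "'a::{ordered_real_vector,lattice}"
  assumes A: "0 \<le> A" and B: "0 \<le> B" and u: "0 \<le> u"
    and gmA: "is_inf_of (gm_set A u) (2 *\<^sub>R gmean A u)"
    and gmB: "is_inf_of (gm_set B u) (2 *\<^sub>R gmean B u)"
    and gmAB: "is_inf_of (gm_set (A + B) u) (2 *\<^sub>R gmean (A + B) u)"
    and cd: "0 \<le> c" "0 \<le> d" "c ^ 2 + d ^ 2 = 1"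
  shows "c *\<^sub>R gmean A u + d *\<^sub>R gmean B u \<le> gmean (A + B) u"
proof -
  have "2 *\<^sub>R (c *\<^sub>R gmean A u + d *\<^sub>R gmean B u) \<le> s" if "s \<in> gm_set (A + B) u" for s
  proof -
    obtain \<theta> where \<theta>: "0 < \<theta>" and s: "s = \<theta> *\<^sub>R (A + B) + inverse \<theta> *\<^sub>R u"
      using \<open>s \<in> gm_set (A + B) u\<close> unfolding gm_set_def by blast
    have "2 *\<^sub>R (c *\<^sub>R gmean A u + d *\<^sub>R gmean B u) = (2 * c) *\<^sub>R gmean A u + (2 * d) *\<^sub>R gmean B u"
      by (simp add: scaleR_add_right)
    also have "\<dots> \<le> (\<theta> *\<^sub>R A + (c ^ 2 / \<theta>) *\<^sub>R u) + (\<theta> *\<^sub>R B + (d ^ 2 / \<theta>) *\<^sub>R u)"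
      using cd \<theta> by (intro add_mono scaled_gmean_le A B u gmA gmB)
    also have "\<dots> = \<theta> *\<^sub>R (A + B) + ((c ^ 2 + d ^ 2) / \<theta>) *\<^sub>R u"
      by (simp add: scaleR_add_right add_divide_distrib scaleR_add_left)
    also have "\<dots> = s"
      using cd(3) by (simp add: s divide_inverse)
    finally show ?thesis .
  qed
  then have "2 *\<^sub>R (c *\<^sub>R gmean A u + d *\<^sub>R gmean B u) \<le> 2 *\<^sub>R gmean (A + B) u"
    using gmAB unfolding is_inf_of_def by blast
  then show ?thesis
    by (simp add: scaleR_le_cancel_left_pos)
qed

lemma gmean_add_le_of_quarter_circle_le:
  fixes A B u w :: "'a::{ordered_real_vector,lattice}"
  assumes arch: "archimedean_vl TYPE('a)" and A: "0 \<le> A" and B: "0 \<le> B" and u: "0 \<le> u"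
    and gmA: "is_inf_of (gm_set A u) (2 *\<^sub>R gmean A u)"
    and gmB: "is_inf_of (gm_set B u) (2 *\<^sub>R gmean B u)"
    and gmAB: "is_inf_of (gm_set (A + B) u) (2 *\<^sub>R gmean (A + B) u)"
    and le_w: "\<And>c d. 0 \<le> c \<Longrightarrow> 0 \<le> d \<Longrightarrow> c ^ 2 + d ^ 2 = 1 \<Longrightarrow>
      c *\<^sub>R gmean A u + d *\<^sub>R gmean B u \<le> w"
  shows "gmean (A + B) u \<le> w"
proof (rule gmean_le_of_inf_le[OF arch _ u gmAB])
  show "0 \<le> A + B"
    using A B by simp
  fix \<theta> :: real
  assume \<theta>: "0 < \<theta>"
  have "inf (\<theta> *\<^sub>R A + \<theta> *\<^sub>R B) (inverse \<theta> *\<^sub>R u) \<le> w"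
  proof (rule inf_add_le_of_split_le[OF arch])
    show "0 \<le> \<theta> *\<^sub>R A" "0 \<le> \<theta> *\<^sub>R B" "0 \<le> inverse \<theta> *\<^sub>R u"
      using A B u \<theta> by (simp_all add: scaleR_nonneg_nonneg)
    fix l :: real
    assume l: "0 \<le> l" "l \<le> 1"
    have "inf (\<theta> *\<^sub>R A) (l *\<^sub>R inverse \<theta> *\<^sub>R u) \<le> sqrt l *\<^sub>R gmean A u"
      using inf_le_scaled_gmean[OF A u gmA _ \<theta>, of "sqrt l"] l by (simp add: divide_inverse)
    moreover have "inf (\<theta> *\<^sub>R B) ((1 - l) *\<^sub>R inverse \<theta> *\<^sub>R u) \<le> sqrt (1 - l) *\<^sub>R gmean B u"
      using inf_le_scaled_gmean[OF B u gmB _ \<theta>, of "sqrt (1 - l)"] l by (simp add: divide_inverse)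
    moreover have "sqrt l *\<^sub>R gmean A u + sqrt (1 - l) *\<^sub>R gmean B u \<le> w"
      using l by (intro le_w) auto
    ultimately show "inf (\<theta> *\<^sub>R A) (l *\<^sub>R inverse \<theta> *\<^sub>R u) +
        inf (\<theta> *\<^sub>R B) ((1 - l) *\<^sub>R inverse \<theta> *\<^sub>R u) \<le> w"
      by (meson add_mono order_trans)
  qed
  then show "inf (\<theta> *\<^sub>R (A + B)) (inverse \<theta> *\<^sub>R u) \<le> w"
    by (simp add: scaleR_add_right)
qed

lemma is_sup_of_cofinal:
  assumes "Q \<subseteq> R" "\<And>r. r \<in> R \<Longrightarrow> \<exists>q\<in>Q. r \<le> q" "is_sup_of Q s"
  shows "is_sup_of R s"
  using assms unfolding is_sup_of_def by (meson order_trans subsetD)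

lemma quarter_circle_cos_sin:
  fixes c d :: real
  assumes c: "0 \<le> c" and d: "0 \<le> d" and cd: "c ^ 2 + d ^ 2 = 1"
  obtains t where "t \<in> {0..pi}" "cos t = c" "sin t = d"
proof
  have "c ^ 2 \<le> 1"
    using cd zero_le_power2[of d] by linarith
  then have "c \<le> 1"
    using power2_le_imp_le[of c 1] by simp
  then show "arccos c \<in> {0..pi}" "cos (arccos c) = c"
    using c arccos_lbound[of c] arccos_ubound[of c] by simp_all
  have "1 - c ^ 2 = d ^ 2"
    using cd by linarith
  then have "sin (arccos c) = sqrt (d ^ 2)"
    using c \<open>c \<le> 1\<close> by (simp add: sin_arccos)
  then show "sin (arccos c) = d"
    using d by simp
qed

lemma pyth_sum_eq_quarter_circle_sup:
  fixes p q s :: "'a::{ordered_real_vector,lattice}"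
  assumes p: "0 \<le> p" and q: "0 \<le> q"
    and sup: "is_sup_of {c *\<^sub>R p + d *\<^sub>R q | c d. 0 \<le> c \<and> 0 \<le> d \<and> c ^ 2 + d ^ 2 = 1} s"
  shows "pyth_sum p q = s"
proof -
  let ?Q = "{c *\<^sub>R p + d *\<^sub>R q | c d. 0 \<le> c \<and> 0 \<le> d \<and> c ^ 2 + d ^ 2 = 1}"
  let ?R = "{cos t *\<^sub>R p + sin t *\<^sub>R q | t. t \<in> {0..2 * pi}}"
  have "?Q \<subseteq> ?R"
  proof
    fix r
    assume "r \<in> ?Q"
    then obtain c d where c: "0 \<le> c" and d: "0 \<le> d" and cd: "c ^ 2 + d ^ 2 = 1"
      and r: "r = c *\<^sub>R p + d *\<^sub>R q"
      by blast
    then obtain t where "t \<in> {0..pi}" "cos t = c" "sin t = d"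
      using quarter_circle_cos_sin by blast
    then show "r \<in> ?R"
      unfolding r by (intro CollectI exI[where x = t]) auto
  qed
  moreover have "\<exists>r'\<in>?Q. r \<le> r'" if "r \<in> ?R" for r
  proof -
    obtain t where r: "r = cos t *\<^sub>R p + sin t *\<^sub>R q"
      using \<open>r \<in> ?R\<close> by blast
    have le: "r \<le> \<bar>cos t\<bar> *\<^sub>R p + \<bar>sin t\<bar> *\<^sub>R q"
      unfolding r using p q by (intro add_mono scaleR_right_mono) auto
    have "\<bar>cos t\<bar> *\<^sub>R p + \<bar>sin t\<bar> *\<^sub>R q \<in> ?Q"
      by (intro CollectI exI[where x = "\<bar>cos t\<bar>"] exI[where x = "\<bar>sin t\<bar>"]) simp
    with le show ?thesis
      by blast
  qed
  ultimately have "is_sup_of ?R s"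
    using sup by (rule is_sup_of_cofinal)
  then show ?thesis
    unfolding pyth_sum_def by (rule the_is_sup_of)
qed

lemma vector_semi_inner_product_add_orthogonal:
  assumes T: "vector_semi_inner_product T" and orth: "T x y = 0"
  shows "T (x + y) (x + y) = T x x + T y y"
proof -
  have "T (x + y) (x + y) = T x (x + y) + T y (x + y)"
    using T unfolding vector_semi_inner_product_def by (simp add: linear_add)
  also have "\<dots> = T x x + T x y + T y x + T y y"
    using T unfolding vector_semi_inner_product_def by (simp add: linear_add)
  also have "T y x = T x y"
    using T unfolding vector_semi_inner_product_def by simp
  finally show ?thesis
    using orth by simp
qed

lemma gmean_add_is_sup_quarter_circle:
  fixes A B u :: "'a::{ordered_real_vector,lattice}"
  assumes arch: "archimedean_vl TYPE('a)" and A: "0 \<le> A" and B: "0 \<le> B" and u: "0 \<le> u"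
    and gmA: "is_inf_of (gm_set A u) (2 *\<^sub>R gmean A u)"
    and gmB: "is_inf_of (gm_set B u) (2 *\<^sub>R gmean B u)"
    and gmAB: "is_inf_of (gm_set (A + B) u) (2 *\<^sub>R gmean (A + B) u)"
  shows "is_sup_of {c *\<^sub>R gmean A u + d *\<^sub>R gmean B u | c d. 0 \<le> c \<and> 0 \<le> d \<and> c ^ 2 + d ^ 2 = 1}
    (gmean (A + B) u)"
  unfolding is_sup_of_def
  using quarter_circle_le_gmean_add[OF A B u gmA gmB gmAB]
    gmean_add_le_of_quarter_circle_le[OF arch A B u gmA gmB gmAB]
  by blast

theorem theorem3p7:
  fixes T :: "'v::real_vector \<Rightarrow> 'v \<Rightarrow> 'f::{ordered_real_vector,lattice}"
    and u :: 'f and x y :: 'v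
  assumes "archimedean_vl TYPE('f)"
    and "geometric_mean_closed TYPE('f)"
    and "vector_semi_inner_product T"
    and "0 \<le> u"
    and "T x y = 0"
  shows "T_norm T u (x + y) = pyth_sum (T_norm T u x) (T_norm T u y)"
proof -
  define A B where "A = T x x" and "B = T y y"
  have A: "0 \<le> A" and B: "0 \<le> B"
    using assms(3) unfolding A_def B_def vector_semi_inner_product_def by auto
  have gm: "is_inf_of (gm_set A u) (2 *\<^sub>R gmean A u)" "is_inf_of (gm_set B u) (2 *\<^sub>R gmean B u)"
    "is_inf_of (gm_set (A + B) u) (2 *\<^sub>R gmean (A + B) u)"
    using A B \<open>0 \<le> u\<close> by (simp_all add: gmean_is_inf_of[OF assms(2)])
  have "pyth_sum (gmean A u) (gmean B u) = gmean (A + B) u"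
    using gmean_nonneg[OF A \<open>0 \<le> u\<close> gm(1)] gmean_nonneg[OF B \<open>0 \<le> u\<close> gm(2)]
      gmean_add_is_sup_quarter_circle[OF assms(1) A B \<open>0 \<le> u\<close> gm]
    by (rule pyth_sum_eq_quarter_circle_sup)
  moreover have "T (x + y) (x + y) = A + B"
    unfolding A_def B_def using assms(3,5) by (rule vector_semi_inner_product_add_orthogonal)
  ultimately show ?thesis
    by (simp add: T_norm_def A_def B_def)
qed

end
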